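(* Let $1\le q<p<\infty$, and define $\mathcal I_{\mathscr S}(t)=\Lambda_p^*(t_1,t_2)-\log t_3$ for $t=(t_1,t_2,t_3)$ with $t_1,t_2\in\mathbb R$, $t_3\in(0,1]$. Let $z>m_{p,q}$ with $z^*=(z^q,1)\in\mathcal J_p$ and set $z^{**}=(z^q,1,1)$. Then $$\inf_{\substack{z_1>0,\ z_2\in(0,1]\\ z_1z_2=z}}\Big[\inf_{\substack{t_1,t_2>0\\ t_1^{1/q}t_2^{-1/p}=z_1}}\Lambda_p^*(t_1,t_2)-\log z_2\Big]=\inf\{\mathcal I_{\mathscr S}(t):t_1,t_2>0,\ t_3\in(0,1],\ t_1^{1/q}t_2^{-1/p}t_3=z\}=\mathcal I_{\mathscr S}(z^{**})=\Lambda_p^*(z^* ),$$ and $z^{**}$ is the unique point of $\{t:t_1,t_2>0,\ t_3\in(0,1],\ t_1^{1/q}t_2^{-1/p}t_3=z\}$ at which the infimum of $\mathcal I_{\mathscr S}$ is attained.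
   Context: Let $f_p(x)=\frac{1}{2p^{1/p}\Gamma(1+1/p)}e^{-|x|^p/p}$, $m_{p,q}=(\int_{\mathbb R}|x|^qf_p(x)dx)^{1/q}$. For $\tau\in\mathbb R^2$, $\Lambda_p(\tau)=\log\int_{\mathbb R}e^{\tau_1|y|^q+\tau_2|y|^p}f_p(y)\,dy$, finite exactly on $\mathcal D_p=\mathbb R\times(-\infty,1/p)$; $\Lambda_p^*(x)=\sup_{\tau\in\mathbb R^2}(\langle x,\tau\rangle-\Lambda_p(\tau))$. $\mathcal J_p$ is the set of $x\in\mathbb R^2$ for which there exists (a unique) $\tau(x)\in\mathcal D_p$ with $\nabla_\tau\Lambda_p(\tau(x))=x$. *)

theory Defs
  imports "HOL-Analysis.Analysis"
begin

definition fp :: "real \<Rightarrow> real \<Rightarrow> real" where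
  "fp p x = 1 / (2 * p powr (1/p) * Gamma (1 + 1/p)) * exp (- (\<bar>x\<bar> powr p) / p)"

definition mpq :: "real \<Rightarrow> real \<Rightarrow> real" where
  "mpq p q = (LINT x|lborel. \<bar>x\<bar> powr q * fp p x) powr (1/q)"

text \<open>Domain D_p where Lambda_p is finite.\<close>
definition Dp :: "real \<Rightarrow> (real \<times> real) set" where
  "Dp p = {\<tau>. snd \<tau> < 1/p}"

text \<open>Log-moment generating function Lambda_p (meaningful on D_p).\<close>
definition Lambda :: "real \<Rightarrow> real \<Rightarrow> real \<times> real \<Rightarrow> real" where
  "Lambda p q \<tau> = ln (LINT y|lborel. exp (fst \<tau> * \<bar>y\<bar> powr q + snd \<tau> * \<bar>y\<bar> powr p) * fp p y)"

text \<open>Legendre transform; Lambda_p = +infinity outside D_p, so the sup ranges over D_p.\<close>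
definition Lambda_star :: "real \<Rightarrow> real \<Rightarrow> real \<times> real \<Rightarrow> ereal" where
  "Lambda_star p q x = (SUP \<tau>\<in>Dp p. ereal (fst x * fst \<tau> + snd x * snd \<tau> - Lambda p q \<tau>))"

definition Jp :: "real \<Rightarrow> real \<Rightarrow> (real \<times> real) set" where
  "Jp p q = {x. \<exists>\<tau>\<in>Dp p. (Lambda p q has_derivative (\<lambda>h. fst x * fst h + snd x * snd h)) (at \<tau>)}"

definition IS :: "real \<Rightarrow> real \<Rightarrow> real \<times> real \<times> real \<Rightarrow> ereal" where
  "IS p q t = Lambda_star p q (fst t, fst (snd t)) - ereal (ln (snd (snd t)))"

end

theory Submission
  imports Defs "HOL-Real_Asymp.Real_Asymp"
begin

text \<open>
  Let \<open>\<tau> = (a, b)\<close> be the point where \<open>Lambda_p\<close> has gradient \<open>z^* = (z^q, 1)\<close>. Since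
  \<open>Lambda_p\<close> is convex, its tangent plane at \<open>\<tau>\<close> supports it, so
  \<open>Lambda_p^*(z^*) = a z^q + b - Lambda_p(\<tau>)\<close>. The substitution \<open>y \<mapsto> c y\<close> gives
  \<open>Lambda_p(a c^q, 1/p - (1/p - b) c^p) = Lambda_p(\<tau>) - log c\<close>; testing the supremum defining
  \<open>Lambda_p^*(t1, t2)\<close> at this point with \<open>c = t2^(-1/p)\<close> shows that on the constraint set
  \<open>I_S(t) - Lambda_p^*(z^*) \<ge> a z^q (t3^(-q) - 1) + (t2 - 1 - log t2) / p - log t3\<close>.
  Each term on the right is nonnegative, and all vanish only at \<open>t = z^**\<close>, provided
  \<open>a \<ge> 0\<close>. That follows from the tangent inequality at \<open>(0, 0)\<close> together with Jensen's
  inequality \<open>Lambda_p(\<tau>) \<ge> a m_{p,q}^q + b\<close> (the \<open>p\<close>-th moment of \<open>f_p\<close> being \<open>1\<close>) and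
  \<open>z > m_{p,q}\<close>. The nested infimum is a reparametrisation of the constrained one.
\<close>

section \<open>Normalisation of the density\<close>

lemma Gamma_set_integral_real:
  fixes s :: real
  assumes s: "s > 0"
  shows "set_integrable lborel {0<..} (\<lambda>t. t powr (s - 1) / exp t)"
    and "(LINT t:{0<..}|lborel. t powr (s - 1) / exp t) = Gamma s"
proof -
  have "((\<lambda>t. t powr (s - 1) / exp t) has_integral Gamma s) {0..} \<longleftrightarrow>
        ((\<lambda>t. t powr (s - 1) / exp t) has_integral Gamma s) {0<..}"
    by (rule has_integral_spike_set_eq; rule negligible_subset[of "{0}"]) auto
  with Gamma_integral_real[OF s]
  have "((\<lambda>t. t powr (s - 1) / exp t) has_integral Gamma s) {0<..}"
    by simp
  from nn_integral_has_integral_lebesgue[OF _ this]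
  have "has_bochner_integral lborel (\<lambda>t. indicator {0<..} t * (t powr (s - 1) / exp t)) (Gamma s)"
    by (intro has_bochner_integral_nn_integral) (use s in \<open>auto intro: Gamma_real_pos less_imp_le\<close>)
  then show "set_integrable lborel {0<..} (\<lambda>t. t powr (s - 1) / exp t)"
    and "(LINT t:{0<..}|lborel. t powr (s - 1) / exp t) = Gamma s"
    unfolding set_integrable_def set_lebesgue_integral_def has_bochner_integral_iff by simp_all
qed

lemma set_integral_exp_neg_powr:
  fixes p :: real
  assumes p: "p > 0"
  shows "set_integrable lborel {0<..} (\<lambda>x. exp (- (x powr p) / p))"
    and "(LINT x:{0<..}|lborel. exp (- (x powr p) / p)) = p powr (1/p - 1) * Gamma (1/p)"
proof -
  define g where "g = (\<lambda>t::real. (p * t) powr (1/p))"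
  define g' where "g' = (\<lambda>t::real. (p * t) powr (1/p - 1))"
  define f where "f = (\<lambda>x::real. exp (- (x powr p) / p))"
  have pos_ray: "einterval 0 \<infinity> = {0::real<..}"
    by (simp add: zero_ereal_def)
  have fg: "f (g t) * g' t = p powr (1/p - 1) * (t powr (1/p - 1) / exp t)" if "t > 0" for t
  proof -
    have "g t powr p = p * t"
      unfolding g_def using p that by (simp add: powr_powr)
    then show ?thesis
      unfolding f_def g'_def using p that by (simp add: powr_mult exp_minus field_simps)
  qed
  have "set_integrable lborel {0<..} (\<lambda>t. p powr (1/p - 1) * (t powr (1/p - 1) / exp t))"
    by (rule set_integrable_mult_right, rule Gamma_set_integral_real(1)) (use p in simp)
  then have fg_integrable: "set_integrable lborel (einterval 0 \<infinity>) (\<lambda>t. f (g t) * g' t)"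
    unfolding pos_ray by (subst set_integrable_cong[OF refl refl fg]) auto
  have g_deriv: "DERIV g x :> g' x" if "0 < ereal x" "ereal x < \<infinity>" for x
  proof -
    have "DERIV g x :> (1/p) * (p * x) powr (1/p - 1) * p"
      unfolding g_def using p that by (auto simp: zero_ereal_def intro!: derivative_eq_intros)
    then show ?thesis
      unfolding g'_def using p by simp
  qed
  have f_cont: "isCont f (g x)" and g'_cont: "isCont g' x"
    if "0 < ereal x" "ereal x < \<infinity>" for x
    using that p unfolding f_def g_def g'_def by (auto simp: zero_ereal_def intro!: continuous_intros)
  have g_lim0: "((ereal \<circ> g \<circ> real_of_ereal) \<longlongrightarrow> 0) (at_right 0)"
    unfolding zero_ereal_def ereal_tendsto_simps g_def using p by real_asymp
  have g_lim_inf: "((ereal \<circ> g \<circ> real_of_ereal) \<longlongrightarrow> \<infinity>) (at_left \<infinity>)"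
    unfolding ereal_tendsto_simps g_def using p by real_asymp
  note subst = interval_integral_substitution_nonneg[of 0 \<infinity> g g' f,
      OF _ g_deriv f_cont g'_cont _ _ g_lim0 g_lim_inf fg_integrable]
  show "set_integrable lborel {0<..} (\<lambda>x. exp (- (x powr p) / p))"
    using subst(1) unfolding f_def g'_def by (simp add: zero_ereal_def)
  have "(LINT x:{0<..}|lborel. exp (- (x powr p) / p)) = (LBINT x=0..\<infinity>. f (g x) * g' x)"
    using subst(2) unfolding f_def g'_def
    by (simp add: zero_ereal_def interval_integral_to_infinity_eq)
  also have "\<dots> = (LINT x:{0<..}|lborel. p powr (1/p - 1) * (x powr (1/p - 1) / exp x))"
    by (simp add: zero_ereal_def interval_integral_to_infinity_eq set_lebesgue_integral_cong fg)
  also have "\<dots> = p powr (1/p - 1) * (LINT x:{0<..}|lborel. x powr (1/p - 1) / exp x)"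
    by (rule set_integral_mult_right)
  also have "\<dots> = p powr (1/p - 1) * Gamma (1/p)"
    using Gamma_set_integral_real(2)[of "1/p"] p by simp
  finally show "(LINT x:{0<..}|lborel. exp (- (x powr p) / p)) = p powr (1/p - 1) * Gamma (1/p)" .
qed

lemma lborel_integral_abs_even:
  fixes F :: "real \<Rightarrow> real"
  assumes F: "set_integrable lborel {0<..} F" and [measurable]: "F \<in> borel_measurable borel"
  shows "integrable lborel (\<lambda>x. F \<bar>x\<bar>)"
    and "(LINT x|lborel. F \<bar>x\<bar>) = 2 * (LINT x:{0<..}|lborel. F x)"
proof -
  define G where "G = (\<lambda>x. indicator {0<..} x * F x)"
  have [measurable]: "G \<in> borel_measurable borel"
    unfolding G_def by measurable
  have G: "integrable lborel G"
    using F unfolding G_def set_integrable_def by simp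
  have G_reflected: "integrable lborel (\<lambda>x. G (0 + (-1) * x))"
    by (rule lborel_integrable_real_affine[OF G]) simp
  have reflect: "(LINT x|lborel. G x) = (LINT x|lborel. G (0 + (-1) * x))"
    using lborel_integral_real_affine[of "-1" G 0] by simp
  have split: "AE x in lborel. F \<bar>x\<bar> = G x + G (0 + (-1) * x)"
    by (rule eventually_mono[OF AE_lborel_singleton[of 0]]) (auto simp: G_def indicator_def)
  show "integrable lborel (\<lambda>x. F \<bar>x\<bar>)"
    using G G_reflected by (subst integrable_cong_AE[OF _ _ split]) auto
  have "(LINT x|lborel. F \<bar>x\<bar>) = (LINT x|lborel. G x + G (0 + (-1) * x))"
    by (rule integral_cong_AE) (use split in auto)
  also have "\<dots> = 2 * (LINT x|lborel. G x)"
    using G G_reflected reflect by simp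
  finally show "(LINT x|lborel. F \<bar>x\<bar>) = 2 * (LINT x:{0<..}|lborel. F x)"
    unfolding G_def set_lebesgue_integral_def by simp
qed

definition fp_const :: "real \<Rightarrow> real" where
  "fp_const p = 1 / (2 * p powr (1/p) * Gamma (1 + 1/p))"

lemma fp_const_pos: "p > 0 \<Longrightarrow> fp_const p > 0"
  unfolding fp_const_def by (simp add: Gamma_real_pos add_pos_pos)

lemma fp_eq: "fp p y = fp_const p * exp (- (\<bar>y\<bar> powr p) / p)"
  unfolding fp_def fp_const_def by simp

lemma fp_measurable [measurable]: "fp p \<in> borel_measurable borel"
  unfolding fp_def by measurable

lemma fp_nonneg: "p > 0 \<Longrightarrow> fp p y \<ge> 0"
  unfolding fp_eq using fp_const_pos[of p] by (simp add: zero_le_mult_iff)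

lemma fp_density:
  fixes p :: real
  assumes p: "p > 0"
  shows "integrable lborel (fp p)" and "(LINT x|lborel. fp p x) = 1"
proof -
  define F where "F = (\<lambda>x::real. exp (- (x powr p) / p))"
  have "F \<in> borel_measurable borel"
    unfolding F_def by measurable
  note even = lborel_integral_abs_even[OF set_integral_exp_neg_powr(1)[OF p, folded F_def] this]
  have fp_F: "fp p = (\<lambda>x. fp_const p * F \<bar>x\<bar>)"
    unfolding fp_eq F_def by auto
  show "integrable lborel (fp p)"
    unfolding fp_F using even(1) by simp
  have "1/p \<notin> \<int>\<^sub>\<le>\<^sub>0"
    using p by (auto dest: nonpos_Ints_nonpos)
  then have Gamma_succ: "Gamma (1 + 1/p) = (1/p) * Gamma (1/p)"
    using Gamma_plus1[of "1/p"] by (simp add: add.commute)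
  have powr_pred: "p powr (1/p - 1) = p powr (1/p) / p"
    using p by (simp add: powr_diff)
  have "Gamma (1/p) \<noteq> 0"
    using p by (intro less_imp_neq[symmetric] Gamma_real_pos) simp
  have "(LINT x|lborel. fp p x) = fp_const p * (2 * (p powr (1/p - 1) * Gamma (1/p)))"
    unfolding fp_F using even(2) set_integral_exp_neg_powr(2)[OF p] by (simp add: F_def)
  also have "\<dots> = 1"
    unfolding fp_const_def Gamma_succ powr_pred using p \<open>Gamma (1/p) \<noteq> 0\<close> by simp
  finally show "(LINT x|lborel. fp p x) = 1" .
qed

section \<open>The log-moment generating function\<close>

definition Lambda_integrand :: "real \<Rightarrow> real \<Rightarrow> real \<times> real \<Rightarrow> real \<Rightarrow> real" where
  "Lambda_integrand p q \<sigma> y = exp (fst \<sigma> * \<bar>y\<bar> powr q + snd \<sigma> * \<bar>y\<bar> powr p) * fp p y"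

lemma Lambda_integrand_eq:
  "Lambda_integrand p q \<sigma> y = fp_const p * exp (fst \<sigma> * \<bar>y\<bar> powr q + (snd \<sigma> - 1/p) * \<bar>y\<bar> powr p)"
  unfolding Lambda_integrand_def fp_eq
  by (simp add: exp_add[symmetric] algebra_simps diff_divide_distrib)

lemma Lambda_eq_ln_integral: "Lambda p q \<sigma> = ln (LINT y|lborel. Lambda_integrand p q \<sigma> y)"
  unfolding Lambda_def Lambda_integrand_def ..

lemma Lambda_integrand_measurable [measurable]: "Lambda_integrand p q \<sigma> \<in> borel_measurable borel"
  unfolding Lambda_integrand_eq by measurable

lemma Lambda_integrand_pos: "p > 0 \<Longrightarrow> Lambda_integrand p q \<sigma> y > 0"
  unfolding Lambda_integrand_eq using fp_const_pos by simp

lemma powr_diff_bounded_above: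
  fixes a e p q :: real
  assumes e: "e > 0" and q: "0 < q" "q < p"
  shows "\<exists>C. \<forall>t\<ge>0. a * t powr q - e * t powr p \<le> C"
proof -
  define T where "T = max 1 ((\<bar>a\<bar>/e) powr (1/(p - q)))"
  have T1: "T \<ge> 1"
    unfolding T_def by simp
  have "((\<bar>a\<bar>/e) powr (1/(p - q))) powr (p - q) \<le> T powr (p - q)"
    using q unfolding T_def by (intro powr_mono2) auto
  then have T_large: "\<bar>a\<bar>/e \<le> T powr (p - q)"
    using q e by (simp add: powr_powr)
  have "a * t powr q - e * t powr p \<le> \<bar>a\<bar> * T powr q" if t: "t \<ge> 0" for t
  proof -
    have a_abs: "a * t powr q \<le> \<bar>a\<bar> * t powr q"
      by (simp add: mult_right_mono)
    show ?thesis
    proof (cases "t \<le> T")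
      case True
      then have "\<bar>a\<bar> * t powr q \<le> \<bar>a\<bar> * T powr q"
        using t q by (intro mult_left_mono powr_mono2) auto
      moreover have "e * t powr p \<ge> 0"
        using e by simp
      ultimately show ?thesis
        using a_abs by linarith
    next
      case False
      then have t_pos: "t > 0"
        using T1 by simp
      have "\<bar>a\<bar> \<le> e * T powr (p - q)"
        using T_large e by (simp add: pos_divide_le_eq mult.commute)
      also have "\<dots> \<le> e * t powr (p - q)"
        using False T1 q e by (intro mult_left_mono powr_mono2) auto
      finally have "\<bar>a\<bar> * t powr q \<le> e * t powr (p - q) * t powr q"
        by (rule mult_right_mono) simp
      also have "\<dots> = e * t powr p"
        using t_pos by (simp add: powr_add[symmetric])
      moreover have "\<bar>a\<bar> * T powr q \<ge> 0"
        by simp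
      ultimately show ?thesis
        using a_abs by linarith
    qed
  qed
  then show ?thesis by blast
qed

lemma integrable_Lambda_integrand:
  assumes q: "0 < q" "q < p" and \<sigma>: "\<sigma> \<in> Dp p"
  shows "integrable lborel (Lambda_integrand p q \<sigma>)"
proof -
  have p: "p > 0" using q by simp
  define c where "c = 1/p - snd \<sigma>"
  have c: "c > 0"
    using \<sigma> unfolding c_def Dp_def by simp
  obtain C where C: "\<And>t. t \<ge> 0 \<Longrightarrow> fst \<sigma> * t powr q - (c/2) * t powr p \<le> C"
    using powr_diff_bounded_above[of "c/2" q p "fst \<sigma>"] c q by auto
  define d where "d = (p * (c/2)) powr (1/p)"
  have d: "d > 0" "d powr p = p * (c/2)"
    unfolding d_def using p c by (simp_all add: powr_powr)
  have fp_scaled: "fp p (0 + d * x) = fp_const p * exp (- (c/2) * \<bar>x\<bar> powr p)" for x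
  proof -
    have "\<bar>d * x\<bar> powr p = p * (c/2) * \<bar>x\<bar> powr p"
      using d by (simp add: abs_mult powr_mult)
    then show ?thesis
      using p by (simp add: fp_eq)
  qed
  have "integrable lborel (\<lambda>x. fp p (0 + d * x))"
    by (rule lborel_integrable_real_affine[OF fp_density(1)[OF p]]) (use d in simp)
  then have majorant: "integrable lborel (\<lambda>x. exp C * fp p (0 + d * x))"
    by simp
  have "\<bar>Lambda_integrand p q \<sigma> x\<bar> \<le> \<bar>exp C * fp p (0 + d * x)\<bar>" for x
  proof -
    have "fst \<sigma> * \<bar>x\<bar> powr q + (snd \<sigma> - 1/p) * \<bar>x\<bar> powr p
          = (fst \<sigma> * \<bar>x\<bar> powr q - (c/2) * \<bar>x\<bar> powr p) - (c/2) * \<bar>x\<bar> powr p"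
      unfolding c_def by (simp add: algebra_simps)
    also have "\<dots> \<le> C - (c/2) * \<bar>x\<bar> powr p"
      using C[of "\<bar>x\<bar>"] by simp
    finally show ?thesis
      unfolding Lambda_integrand_eq fp_scaled using fp_const_pos[OF p]
      by (simp add: exp_diff[symmetric] exp_add[symmetric] mult_left_mono)
  qed
  then show ?thesis
    by (intro Bochner_Integration.integrable_bound[OF majorant]) auto
qed

lemma integral_Lambda_integrand_pos:
  assumes q: "0 < q" "q < p" and \<sigma>: "\<sigma> \<in> Dp p"
  shows "(LINT y|lborel. Lambda_integrand p q \<sigma> y) > 0"
proof -
  have pos: "\<And>y. Lambda_integrand p q \<sigma> y > 0"
    using q by (intro Lambda_integrand_pos) simp
  have "(LINT y|lborel. Lambda_integrand p q \<sigma> y) \<noteq> 0"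
  proof
    assume "(LINT y|lborel. Lambda_integrand p q \<sigma> y) = 0"
    then have "AE y in lborel. Lambda_integrand p q \<sigma> y = 0"
      using integral_nonneg_eq_0_iff_AE[OF integrable_Lambda_integrand[OF q \<sigma>]] pos
      by (simp add: less_imp_le)
    moreover have "{y \<in> space lborel. Lambda_integrand p q \<sigma> y \<noteq> 0} = UNIV"
      using pos by (auto simp: less_imp_neq[symmetric])
    ultimately show False
      using AE_iff_measurable[of UNIV lborel "\<lambda>y. Lambda_integrand p q \<sigma> y = 0"] by simp
  qed
  moreover have "(LINT y|lborel. Lambda_integrand p q \<sigma> y) \<ge> 0"
    using pos by (intro integral_nonneg_AE) (simp add: less_imp_le)
  ultimately show ?thesis by simp
qed

lemma convex_Dp: "convex (Dp p)"
proof -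
  have "Dp p = {x. inner (0::real, 1::real) x < 1/p}"
    unfolding Dp_def by (auto simp: inner_prod_def)
  then show ?thesis
    using convex_halfspace_lt by metis
qed

lemma open_Dp: "open (Dp p)"
  unfolding Dp_def by (intro open_Collect_less continuous_intros)

text \<open>Hoelder's inequality, obtained here from the convexity of the exponential.\<close>

lemma convex_on_Lambda:
  assumes q: "0 < q" "q < p"
  shows "convex_on (Dp p) (Lambda p q)"
proof (rule convex_onI[OF _ convex_Dp])
  fix t :: real and \<sigma> \<rho>
  assume t: "0 < t" "t < 1" and \<sigma>: "\<sigma> \<in> Dp p" and \<rho>: "\<rho> \<in> Dp p"
  have p: "p > 0" using q by simp
  define m where "m = (1 - t) *\<^sub>R \<sigma> + t *\<^sub>R \<rho>"
  have m: "m \<in> Dp p"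
    unfolding m_def using t \<sigma> \<rho> by (intro convexD_alt[OF convex_Dp]) auto
  define A where "A = (LINT y|lborel. Lambda_integrand p q \<sigma> y)"
  define B where "B = (LINT y|lborel. Lambda_integrand p q \<rho> y)"
  have A: "A > 0" and B: "B > 0"
    unfolding A_def B_def using integral_Lambda_integrand_pos[OF q] \<sigma> \<rho> by auto
  define E where "E = exp ((1 - t) * ln A + t * ln B)"
  have pointwise: "Lambda_integrand p q m y
      \<le> E * ((1 - t) / A * Lambda_integrand p q \<sigma> y + t / B * Lambda_integrand p q \<rho> y)" for y
  proof -
    define u where "u = fst \<sigma> * \<bar>y\<bar> powr q + snd \<sigma> * \<bar>y\<bar> powr p"
    define v where "v = fst \<rho> * \<bar>y\<bar> powr q + snd \<rho> * \<bar>y\<bar> powr p"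
    have "exp ((1 - t) * u + t * v) = E * exp ((1 - t) * (u - ln A) + t * (v - ln B))"
      unfolding E_def by (simp add: exp_add[symmetric] algebra_simps)
    also have "\<dots> \<le> E * ((1 - t) * exp (u - ln A) + t * exp (v - ln B))"
      using convex_onD[OF exp_convex, of t "u - ln A" "v - ln B"] t
      by (intro mult_left_mono) (auto simp: E_def)
    also have "\<dots> = E * ((1 - t) / A * exp u + t / B * exp v)"
      using A B by (simp add: exp_diff)
    finally have "exp ((1 - t) * u + t * v) * fp p y \<le> E * ((1 - t) / A * exp u + t / B * exp v) * fp p y"
      by (intro mult_right_mono) (use fp_nonneg[OF p] in auto)
    then show ?thesis
      unfolding Lambda_integrand_def m_def u_def v_def by (simp add: algebra_simps)
  qed
  note integrable = integrable_Lambda_integrand[OF q]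
  have "(LINT y|lborel. Lambda_integrand p q m y)
      \<le> (LINT y|lborel. E * ((1 - t) / A * Lambda_integrand p q \<sigma> y + t / B * Lambda_integrand p q \<rho> y))"
    by (rule integral_mono[OF integrable[OF m] _ pointwise]) (use integrable \<sigma> \<rho> in simp)
  also have "\<dots> = E"
    using integrable[OF \<sigma>] integrable[OF \<rho>] A B unfolding A_def B_def by simp
  finally have "Lambda p q m \<le> ln E"
    unfolding Lambda_eq_ln_integral using integral_Lambda_integrand_pos[OF q m] by simp
  also have "ln E = (1 - t) * Lambda p q \<sigma> + t * Lambda p q \<rho>"
    unfolding E_def Lambda_eq_ln_integral A_def B_def by simp
  finally show "Lambda p q ((1 - t) *\<^sub>R \<sigma> + t *\<^sub>R \<rho>) \<le> (1 - t) * Lambda p q \<sigma> + t * Lambda p q \<rho>"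
    unfolding m_def .
qed

text \<open>The substitution \<open>y \<mapsto> c y\<close> in the integral defining \<open>Lambda\<close>.\<close>

lemma Lambda_scale:
  assumes q: "0 < q" "q < p" and \<sigma>: "\<sigma> \<in> Dp p" and c: "c > 0"
  shows "Lambda p q (fst \<sigma> * c powr q, 1/p - (1/p - snd \<sigma>) * c powr p) = Lambda p q \<sigma> - ln c"
proof -
  define \<sigma>c where "\<sigma>c = (fst \<sigma> * c powr q, 1/p - (1/p - snd \<sigma>) * c powr p)"
  have scaled: "Lambda_integrand p q \<sigma> (c * x) = Lambda_integrand p q \<sigma>c x" for x
  proof -
    have "\<bar>c * x\<bar> powr q = c powr q * \<bar>x\<bar> powr q" "\<bar>c * x\<bar> powr p = c powr p * \<bar>x\<bar> powr p"
      using c by (simp_all add: abs_mult powr_mult)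
    then show ?thesis
      unfolding Lambda_integrand_eq \<sigma>c_def by (simp add: algebra_simps)
  qed
  have "(LINT y|lborel. Lambda_integrand p q \<sigma> y) = c * (LINT y|lborel. Lambda_integrand p q \<sigma>c y)"
    using lborel_integral_real_affine[of c "Lambda_integrand p q \<sigma>" 0] c by (simp add: scaled)
  moreover have "(LINT y|lborel. Lambda_integrand p q \<sigma> y) > 0"
    by (rule integral_Lambda_integrand_pos[OF q \<sigma>])
  ultimately show ?thesis
    unfolding Lambda_eq_ln_integral \<sigma>c_def[symmetric] using c
    by (simp add: ln_mult zero_less_mult_iff)
qed

lemma Lambda_zero: "p > 0 \<Longrightarrow> Lambda p q (0, 0) = 0"
  unfolding Lambda_eq_ln_integral Lambda_integrand_def using fp_density(2) by simp

section \<open>The Legendre transform\<close>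

lemma convex_on_above_tangent:
  fixes f :: "'a::real_normed_vector \<Rightarrow> real"
  assumes f: "convex_on S f" and S: "open S" and x: "x \<in> S" and y: "y \<in> S"
    and D: "(f has_derivative f') (at x)"
  shows "f' (y - x) \<le> f y - f x"
proof -
  define l where "l = (\<lambda>s::real. x + s *\<^sub>R (y - x))"
  define A where "A = l -` S"
  have l_affine: "l ((1 - t) * s + t * r) = (1 - t) *\<^sub>R l s + t *\<^sub>R l r" for t s r
    unfolding l_def by (simp add: algebra_simps)
  have A: "convex A"
    using convex_on_imp_convex[OF f] unfolding A_def convex_alt by (simp add: l_affine)
  have convex_fl: "convex_on A (f \<circ> l)"
    using convex_onD[OF f] by (intro convex_onI[OF _ A]) (simp add: A_def l_affine)
  have "open A"
    unfolding A_def l_def by (intro continuous_open_vimage[OF S] continuous_intros)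
  moreover have "0 \<in> A" and one: "1 \<in> A"
    using x y unfolding A_def l_def by simp_all
  ultimately have zero: "0 \<in> interior A"
    by (simp add: interior_open)
  have "(l has_derivative (\<lambda>h. h *\<^sub>R (y - x))) (at 0)"
    unfolding l_def by (auto intro!: derivative_eq_intros)
  from has_derivative_compose[OF this] D
  have "((f \<circ> l) has_derivative (\<lambda>h. f' (h *\<^sub>R (y - x)))) (at 0)"
    unfolding l_def by (simp add: o_def)
  then have "((f \<circ> l) has_derivative (\<lambda>h. f' (y - x) * h)) (at 0)"
    by (rule has_derivative_eq_rhs)
      (use linear_scale[OF has_derivative_linear[OF D]] in \<open>simp add: fun_eq_iff mult.commute\<close>)
  then have "((f \<circ> l) has_field_derivative f' (y - x)) (at 0 within A)"
    unfolding has_field_derivative_def by (rule has_derivative_at_withinI)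
  from convex_on_imp_above_tangent[OF convex_fl convex_connected[OF A] zero one this]
  show ?thesis
    unfolding l_def by simp
qed

lemma Lambda_star_at_gradient:
  assumes q: "0 < q" "q < p" and \<tau>: "\<tau> \<in> Dp p"
    and D: "(Lambda p q has_derivative (\<lambda>h. x1 * fst h + x2 * snd h)) (at \<tau>)"
  shows "Lambda_star p q (x1, x2) = ereal (x1 * fst \<tau> + x2 * snd \<tau> - Lambda p q \<tau>)"
proof (rule antisym)
  have "x1 * fst \<sigma> + x2 * snd \<sigma> - Lambda p q \<sigma> \<le> x1 * fst \<tau> + x2 * snd \<tau> - Lambda p q \<tau>"
    if "\<sigma> \<in> Dp p" for \<sigma>
    using convex_on_above_tangent[OF convex_on_Lambda[OF q] open_Dp \<tau> that D]
    by (simp add: algebra_simps)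
  then show "Lambda_star p q (x1, x2) \<le> ereal (x1 * fst \<tau> + x2 * snd \<tau> - Lambda p q \<tau>)"
    unfolding Lambda_star_def by (intro SUP_least) simp
  show "ereal (x1 * fst \<tau> + x2 * snd \<tau> - Lambda p q \<tau>) \<le> Lambda_star p q (x1, x2)"
    unfolding Lambda_star_def by (rule SUP_upper2[OF \<tau>]) simp
qed

text \<open>Test the supremum defining \<open>Lambda_star\<close> at the image of \<open>\<tau>\<close> under the scaling of
  \<open>Lambda_scale\<close> with \<open>c = t2 powr (-1/p)\<close>.\<close>

lemma Lambda_star_ge_scaled:
  assumes q: "0 < q" "q < p" and \<tau>: "\<tau> \<in> Dp p" and t: "t1 > 0" "t2 > 0"
  shows "ereal (fst \<tau> * t1 * t2 powr (-q/p) + snd \<tau> - Lambda p q \<tau> + (t2 - 1 - ln t2) / p)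
           \<le> Lambda_star p q (t1, t2)"
proof -
  have p: "p > 0" using q by simp
  define c where "c = t2 powr (-1/p)"
  have c: "c > 0"
    unfolding c_def using t by simp
  have c_powr_q: "c powr q = t2 powr (-q/p)"
    unfolding c_def using t by (simp add: powr_powr)
  have "c powr p = t2 powr (-1/p * p)"
    unfolding c_def by (rule powr_powr)
  then have c_powr_p: "c powr p = 1 / t2"
    using p t by (simp add: powr_minus divide_inverse)
  define \<sigma> where "\<sigma> = (fst \<tau> * c powr q, 1/p - (1/p - snd \<tau>) * c powr p)"
  have "(1/p - snd \<tau>) * c powr p > 0"
    using \<tau> c unfolding Dp_def by simp
  then have \<sigma>: "\<sigma> \<in> Dp p"
    unfolding Dp_def \<sigma>_def by simp
  have "Lambda p q \<sigma> = Lambda p q \<tau> + ln t2 / p"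
    unfolding \<sigma>_def Lambda_scale[OF q \<tau> c] using t by (simp add: c_def)
  moreover have "fst \<sigma> = fst \<tau> * t2 powr (-q/p)" and "t2 * snd \<sigma> = snd \<tau> + (t2 - 1) / p"
    unfolding \<sigma>_def c_powr_q c_powr_p using t p by (simp_all add: field_simps)
  ultimately have "t1 * fst \<sigma> + t2 * snd \<sigma> - Lambda p q \<sigma>
      = fst \<tau> * t1 * t2 powr (-q/p) + snd \<tau> - Lambda p q \<tau> + (t2 - 1 - ln t2) / p"
    using p by (simp add: field_simps)
  moreover have "ereal (t1 * fst \<sigma> + t2 * snd \<sigma> - Lambda p q \<sigma>) \<le> Lambda_star p q (t1, t2)"
    unfolding Lambda_star_def by (rule SUP_upper2[OF \<sigma>]) simp
  ultimately show ?thesis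
    by simp
qed

section \<open>Moments of the density\<close>

lemma integrable_moments_fp:
  assumes q: "0 < q" "q < p"
  shows "integrable lborel (\<lambda>y. \<bar>y\<bar> powr q * fp p y)"
    and "integrable lborel (\<lambda>y. \<bar>y\<bar> powr p * fp p y)"
proof -
  have p: "p > 0" using q by simp
  have fp: "fp p y \<ge> 0" for y
    by (rule fp_nonneg[OF p])
  have "(1, 0) \<in> Dp p" and "(0, 1/(2*p)) \<in> Dp p"
    unfolding Dp_def using p by (simp_all add: field_simps)
  note majorants = integrable_Lambda_integrand[OF q this(1)] integrable_Lambda_integrand[OF q this(2)]
  have "\<bar>y\<bar> powr q * fp p y \<le> Lambda_integrand p q (1, 0) y" for y
    unfolding Lambda_integrand_def using fp
    by (intro mult_right_mono) (auto intro: order.trans[OF _ exp_ge_add_one_self])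
  then show "integrable lborel (\<lambda>y. \<bar>y\<bar> powr q * fp p y)"
    using fp Lambda_integrand_pos[OF p]
    by (intro Bochner_Integration.integrable_bound[OF majorants(1)] AE_I2) (auto simp: abs_of_pos)
  have "\<bar>y\<bar> powr p \<le> (2*p) * exp (\<bar>y\<bar> powr p / (2*p))" for y
    using exp_ge_add_one_self[of "\<bar>y\<bar> powr p / (2*p)"] p by (simp add: field_simps)
  then have "\<bar>y\<bar> powr p * fp p y \<le> (2*p) * Lambda_integrand p q (0, 1/(2*p)) y" for y
    unfolding Lambda_integrand_def using fp by (simp add: mult_right_mono mult.assoc[symmetric])
  moreover have majorant_p: "integrable lborel (\<lambda>y. (2*p) * Lambda_integrand p q (0, 1/(2*p)) y)"
    using majorants(2) by simp
  ultimately show "integrable lborel (\<lambda>y. \<bar>y\<bar> powr p * fp p y)"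
    using fp Lambda_integrand_pos[OF p] p
    by (intro Bochner_Integration.integrable_bound[OF majorant_p] AE_I2) (auto simp: abs_mult abs_of_pos)
qed

text \<open>Jensen's inequality, via the tangent line \<open>exp u \<ge> exp K * (1 + (u - K))\<close> at the mean \<open>K\<close>.\<close>

lemma Lambda_ge_moments:
  assumes q: "0 < q" "q < p" and \<sigma>: "\<sigma> \<in> Dp p"
  shows "fst \<sigma> * (LINT y|lborel. \<bar>y\<bar> powr q * fp p y) + snd \<sigma> * (LINT y|lborel. \<bar>y\<bar> powr p * fp p y)
           \<le> Lambda p q \<sigma>"
proof -
  have p: "p > 0" using q by simp
  define K where
    "K = fst \<sigma> * (LINT y|lborel. \<bar>y\<bar> powr q * fp p y) + snd \<sigma> * (LINT y|lborel. \<bar>y\<bar> powr p * fp p y)"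
  define h where "h = (\<lambda>y. exp K * ((1 - K) * fp p y + fst \<sigma> * (\<bar>y\<bar> powr q * fp p y)
                                  + snd \<sigma> * (\<bar>y\<bar> powr p * fp p y)))"
  note moments = integrable_moments_fp[OF q] and density = fp_density[OF p]
  have "integrable lborel h"
    unfolding h_def using moments density by simp
  moreover have "(LINT y|lborel. h y) = exp K"
    unfolding h_def K_def using moments density by simp
  moreover have "h y \<le> Lambda_integrand p q \<sigma> y" for y
  proof -
    define u where "u = fst \<sigma> * \<bar>y\<bar> powr q + snd \<sigma> * \<bar>y\<bar> powr p"
    have "exp K * (1 + (u - K)) \<le> exp K * exp (u - K)"
      by (intro mult_left_mono) auto
    then have "exp K * (1 + (u - K)) * fp p y \<le> exp u * fp p y"
      using fp_nonneg[OF p] by (intro mult_right_mono) (auto simp: exp_diff)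
    then show ?thesis
      unfolding h_def Lambda_integrand_def u_def by (simp add: algebra_simps)
  qed
  ultimately have "exp K \<le> (LINT y|lborel. Lambda_integrand p q \<sigma> y)"
    by (metis integral_mono integrable_Lambda_integrand[OF q \<sigma>])
  then show ?thesis
    unfolding K_def[symmetric] Lambda_eq_ln_integral
    using integral_Lambda_integrand_pos[OF q \<sigma>] by (simp add: ln_ge_iff)
qed

text \<open>By scaling, \<open>Lambda (0, s) = - ln (1 - p s) / p\<close>; Jensen's inequality bounds it below by
  \<open>s\<close> times the \<open>p\<close>-th moment, with equality at \<open>s = 0\<close>, so the derivatives agree there.\<close>

lemma integral_abs_powr_fp:
  assumes p: "p > 0"
  shows "(LINT y|lborel. \<bar>y\<bar> powr p * fp p y) = 1"
proof -
  define q :: real where "q = p / 2"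
  have q: "0 < q" "q < p"
    unfolding q_def using p by simp_all
  define P where "P = (LINT y|lborel. \<bar>y\<bar> powr p * fp p y)"
  define f where "f = (\<lambda>s::real. - (1/p) * ln (1 - p * s) - s * P)"
  have f_min: "f 0 \<le> f s" if s: "\<bar>0 - s\<bar> < 1/p" for s
  proof -
    have "s < 1/p"
      using s by simp
    then have ps: "1 - p * s > 0"
      using p by (simp add: field_simps)
    define c where "c = (1 - p * s) powr (1/p)"
    have c: "c > 0" "c powr p = 1 - p * s"
      unfolding c_def using ps p by (simp_all add: powr_powr)
    have "(0, 0) \<in> Dp p"
      unfolding Dp_def using p by simp
    from Lambda_scale[OF q this c(1)]
    have "Lambda p q (0, s) = - ln c"
      using c(2) Lambda_zero[OF p] p by (simp add: field_simps)
    moreover have "ln c = (1/p) * ln (1 - p * s)"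
      unfolding c_def using ps by (simp add: ln_powr)
    moreover have "(0, s) \<in> Dp p"
      unfolding Dp_def using s by simp
    note Lambda_ge_moments[OF q this]
    ultimately show ?thesis
      unfolding f_def P_def by simp
  qed
  have "DERIV f 0 :> (- (1/p) * (- p / (1 - p * 0)) - P)"
    unfolding f_def by (auto intro!: derivative_eq_intros)
  then have "- (1/p) * (- p / (1 - p * 0)) - P = 0"
    by (rule DERIV_local_min[where d="1/p"]) (use f_min p in auto)
  then show ?thesis
    unfolding P_def[symmetric] using p by simp
qed

lemma mpq_nonneg: "mpq p q \<ge> 0"
  unfolding mpq_def by simp

lemma moment_less_powr:
  assumes q: "q > 0" and z: "mpq p q < z"
  shows "(LINT y|lborel. \<bar>y\<bar> powr q * fp p y) < z powr q"
proof (cases "(LINT y|lborel. \<bar>y\<bar> powr q * fp p y) > 0")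
  case True
  then have "((LINT y|lborel. \<bar>y\<bar> powr q * fp p y) powr (1/q)) powr q < z powr q"
    using z q unfolding mpq_def by (intro powr_less_mono2) auto
  then show ?thesis
    using True q by (simp add: powr_powr)
next
  case False
  moreover have "z powr q > 0"
    using z mpq_nonneg[of p q] by simp
  ultimately show ?thesis
    by linarith
qed

lemma gradient_fst_nonneg:
  assumes q: "0 < q" "q < p" and \<tau>: "\<tau> \<in> Dp p"
    and D: "(Lambda p q has_derivative (\<lambda>h. x1 * fst h + 1 * snd h)) (at \<tau>)"
    and x1: "(LINT y|lborel. \<bar>y\<bar> powr q * fp p y) < x1"
  shows "fst \<tau> \<ge> 0"
proof -
  have p: "p > 0" using q by simp
  have "(0, 0) \<in> Dp p"
    unfolding Dp_def using p by simp
  from convex_on_above_tangent[OF convex_on_Lambda[OF q] open_Dp \<tau> this D]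
  have "- x1 * fst \<tau> - snd \<tau> \<le> - Lambda p q \<tau>"
    using Lambda_zero[OF p] by simp
  moreover have "fst \<tau> * (LINT y|lborel. \<bar>y\<bar> powr q * fp p y) + snd \<tau> \<le> Lambda p q \<tau>"
    using Lambda_ge_moments[OF q \<tau>] integral_abs_powr_fp[OF p] by simp
  ultimately have "fst \<tau> * (x1 - (LINT y|lborel. \<bar>y\<bar> powr q * fp p y)) \<ge> 0"
    by (simp add: algebra_simps)
  then show ?thesis
    using x1 by (simp add: zero_le_mult_iff)
qed

section \<open>The constrained minimum\<close>

lemma rate_excess:
  fixes a Z p q t2 t3 :: real
  assumes "0 \<le> a" "0 \<le> Z" "0 < p" "0 < q" "0 < t2" "0 < t3" "t3 \<le> 1"
  defines "e \<equiv> a * Z * (1 / t3 powr q - 1) + (t2 - 1 - ln t2) / p - ln t3"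
  shows "0 \<le> e" and "e = 0 \<Longrightarrow> t2 = 1 \<and> t3 = 1"
proof -
  have "t3 powr q \<le> 1"
    using assms by (simp add: powr_le1)
  then have term1: "0 \<le> a * Z * (1 / t3 powr q - 1)"
    using assms by simp
  have term2: "0 \<le> (t2 - 1 - ln t2) / p"
    using ln_le_minus_one[of t2] assms by simp
  have term3: "0 \<le> - ln t3"
    using assms by simp
  show "0 \<le> e"
    unfolding e_def using term1 term2 term3 by linarith
  assume "e = 0"
  then have "(t2 - 1 - ln t2) / p = 0" and "ln t3 = 0"
    unfolding e_def using term1 term2 term3 by linarith+
  then show "t2 = 1 \<and> t3 = 1"
    using ln_eq_minus_one[of t2] assms by auto
qed

lemma IS_ge_on_constraint:
  assumes q: "0 < q" "q < p" and \<tau>: "\<tau> \<in> Dp p" and a: "0 \<le> fst \<tau>" and z: "0 < z"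
    and L: "Lambda_star p q (z powr q, 1) = ereal (z powr q * fst \<tau> + snd \<tau> - Lambda p q \<tau>)"
    and t: "0 < t1" "0 < t2" "0 < t3" "t3 \<le> 1" "t1 powr (1/q) * t2 powr (-1/p) * t3 = z"
  shows "IS p q (z powr q, 1, 1) \<le> IS p q (t1, t2, t3)"
    and "IS p q (t1, t2, t3) = IS p q (z powr q, 1, 1) \<Longrightarrow> (t1, t2, t3) = (z powr q, 1, 1)"
proof -
  have p: "p > 0" using q by simp
  define V where "V = z powr q * fst \<tau> + snd \<tau> - Lambda p q \<tau>"
  define e where "e = fst \<tau> * z powr q * (1 / t3 powr q - 1) + (t2 - 1 - ln t2) / p - ln t3"
  note excess = rate_excess[OF a _ p q(1) t(2,3,4), of "z powr q", folded e_def]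
  have IS_min: "IS p q (z powr q, 1, 1) = ereal V"
    using L by (simp add: IS_def V_def)
  have "t1 powr (1/q) * t2 powr (-1/p) = z / t3"
    using t by (simp add: field_simps)
  then have "(t1 powr (1/q) * t2 powr (-1/p)) powr q = (z / t3) powr q"
    by simp
  then have "t1 * t2 powr (-q/p) = z powr q / t3 powr q"
    using t q z by (simp add: powr_mult powr_powr powr_divide)
  with Lambda_star_ge_scaled[OF q \<tau> t(1,2)]
  have "ereal (fst \<tau> * (z powr q / t3 powr q) + snd \<tau> - Lambda p q \<tau> + (t2 - 1 - ln t2) / p)
          \<le> Lambda_star p q (t1, t2)"
    by (simp add: mult.assoc)
  then have IS_t: "ereal (V + e) \<le> IS p q (t1, t2, t3)"
    unfolding IS_def V_def e_def by (simp add: ereal_le_minus algebra_simps)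
  then show "IS p q (z powr q, 1, 1) \<le> IS p q (t1, t2, t3)"
    unfolding IS_min using excess(1) by (simp add: order.trans[rotated])
  assume "IS p q (t1, t2, t3) = IS p q (z powr q, 1, 1)"
  with IS_t excess(1) have "e = 0"
    unfolding IS_min by simp
  then have "t2 = 1" "t3 = 1"
    using excess(2) by simp_all
  moreover from this have "t1 = z powr q"
    using t q by (simp flip: t(5) add: powr_powr)
  ultimately show "(t1, t2, t3) = (z powr q, 1, 1)"
    by simp
qed

lemma INF_constrained_split:
  fixes F :: "real \<times> real \<Rightarrow> ereal" and g :: "real \<Rightarrow> real \<Rightarrow> real"
  assumes g_pos: "\<And>t1 t2. 0 < t1 \<Longrightarrow> 0 < t2 \<Longrightarrow> 0 < g t1 t2"
  shows "(INF zz\<in>{(z1, z2). z1 > 0 \<and> 0 < z2 \<and> z2 \<le> 1 \<and> z1 * z2 = z}.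
            (INF tt\<in>{(t1, t2). t1 > 0 \<and> t2 > 0 \<and> g t1 t2 = fst zz}. F tt) - ereal (ln (snd zz)))
       = (INF t\<in>{(t1, t2, t3). t1 > 0 \<and> t2 > 0 \<and> 0 < t3 \<and> t3 \<le> 1 \<and> g t1 t2 * t3 = z}.
            F (fst t, fst (snd t)) - ereal (ln (snd (snd t))))"
    (is "?nested = ?flat")
proof (rule antisym)
  show "?nested \<le> ?flat"
  proof (rule INF_greatest)
    fix t
    assume "t \<in> {(t1, t2, t3). t1 > 0 \<and> t2 > 0 \<and> 0 < t3 \<and> t3 \<le> 1 \<and> g t1 t2 * t3 = z}"
    then obtain t1 t2 t3 where t_eq: "t = (t1, t2, t3)"
      and t: "0 < t1" "0 < t2" "0 < t3" "t3 \<le> 1" "g t1 t2 * t3 = z"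
      by auto
    have "?nested \<le> (INF tt\<in>{(s1, s2). s1 > 0 \<and> s2 > 0 \<and> g s1 s2 = g t1 t2}. F tt) - ereal (ln t3)"
      by (rule INF_lower2[of "(g t1 t2, t3)"]) (use t g_pos in auto)
    also have "\<dots> \<le> F (t1, t2) - ereal (ln t3)"
      by (intro ereal_minus_mono INF_lower) (use t in auto)
    finally show "?nested \<le> F (fst t, fst (snd t)) - ereal (ln (snd (snd t)))"
      by (simp add: t_eq)
  qed
  show "?flat \<le> ?nested"
  proof (rule INF_greatest)
    fix zz
    assume "zz \<in> {(z1, z2). z1 > 0 \<and> 0 < z2 \<and> z2 \<le> 1 \<and> z1 * z2 = z}"
    then obtain z1 z2 where zz_eq: "zz = (z1, z2)" and zz: "0 < z1" "0 < z2" "z2 \<le> 1" "z1 * z2 = z"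
      by auto
    have "?flat + ereal (ln z2) \<le> F (t1, t2)" if "0 < t1" "0 < t2" "g t1 t2 = z1" for t1 t2
    proof -
      have "?flat \<le> F (t1, t2) - ereal (ln z2)"
        by (rule INF_lower2[of "(t1, t2, z2)"]) (use that zz in auto)
      then show ?thesis
        by (simp add: ereal_le_minus)
    qed
    then have "?flat + ereal (ln z2) \<le> (INF tt\<in>{(t1, t2). t1 > 0 \<and> t2 > 0 \<and> g t1 t2 = z1}. F tt)"
      by (intro INF_greatest) auto
    then show "?flat \<le> (INF tt\<in>{(t1, t2). t1 > 0 \<and> t2 > 0 \<and> g t1 t2 = fst zz}. F tt)
                        - ereal (ln (snd zz))"
      by (simp add: zz_eq ereal_le_minus)
  qed
qed

theorem lemma2p6:
  fixes p q z :: real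
  assumes "1 \<le> q" and "q < p"
    and "z > mpq p q"
    and "(z powr q, 1) \<in> Jp p q"
  shows "(INF zz\<in>{(z1, z2). z1 > 0 \<and> 0 < z2 \<and> z2 \<le> 1 \<and> z1 * z2 = z}.
            (INF tt\<in>{(t1, t2). t1 > 0 \<and> t2 > 0 \<and> t1 powr (1/q) * t2 powr (-1/p) = fst zz}.
               Lambda_star p q tt) - ereal (ln (snd zz)))
         = (INF t\<in>{(t1, t2, t3). t1 > 0 \<and> t2 > 0 \<and> 0 < t3 \<and> t3 \<le> 1 \<and>
                     t1 powr (1/q) * t2 powr (-1/p) * t3 = z}. IS p q t)
     \<and> (INF t\<in>{(t1, t2, t3). t1 > 0 \<and> t2 > 0 \<and> 0 < t3 \<and> t3 \<le> 1 \<and>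
                     t1 powr (1/q) * t2 powr (-1/p) * t3 = z}. IS p q t)
         = IS p q (z powr q, 1, 1)
     \<and> IS p q (z powr q, 1, 1) = Lambda_star p q (z powr q, 1)
     \<and> (\<forall>t\<in>{(t1, t2, t3). t1 > 0 \<and> t2 > 0 \<and> 0 < t3 \<and> t3 \<le> 1 \<and>
                     t1 powr (1/q) * t2 powr (-1/p) * t3 = z}.
          IS p q t = IS p q (z powr q, 1, 1) \<longleftrightarrow> t = (z powr q, 1, 1))"
proof -
  have q: "0 < q" "q < p"
    using assms(1,2) by auto
  have z: "z > 0"
    using assms(3) mpq_nonneg[of p q] by linarith
  obtain \<tau> where \<tau>: "\<tau> \<in> Dp p"
    and D: "(Lambda p q has_derivative (\<lambda>h. z powr q * fst h + 1 * snd h)) (at \<tau>)"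
    using assms(4) unfolding Jp_def by auto
  have a: "fst \<tau> \<ge> 0"
    by (rule gradient_fst_nonneg[OF q \<tau> D moment_less_powr[OF q(1) assms(3)]])
  note IS_min = IS_ge_on_constraint[OF q \<tau> a z Lambda_star_at_gradient[OF q \<tau> D, unfolded mult_1]]
  define S where "S = {(t1, t2, t3). t1 > 0 \<and> t2 > 0 \<and> 0 < t3 \<and> t3 \<le> 1 \<and>
                     t1 powr (1/q) * t2 powr (-1/p) * t3 = z}"
  have "(z powr q, 1, 1) \<in> S"
    unfolding S_def using z q by (simp add: powr_powr)
  then have "(INF t\<in>S. IS p q t) = IS p q (z powr q, 1, 1)"
    using IS_min(1) unfolding S_def by (intro antisym INF_lower INF_greatest) auto
  moreover have "\<forall>t\<in>S. IS p q t = IS p q (z powr q, 1, 1) \<longleftrightarrow> t = (z powr q, 1, 1)"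
    using IS_min(2) unfolding S_def by auto
  moreover note INF_constrained_split[of "\<lambda>t1 t2. t1 powr (1/q) * t2 powr (-1/p)" "Lambda_star p q" z]
  ultimately show ?thesis
    unfolding S_def by (simp add: IS_def)
qed

end
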